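(* Let $A,B,C\in\mathrm{Sym}(\mathbb C^{2d})$. If $A\#B$, $B\#C$, $(A\#B)\#C$ and $A\#(B\#C)$ are all well defined, then $(A\#B)\#C=A\#(B\#C)$. Moreover, for all $A,B\in\mathrm{Sym}(\mathbb C^{2d})$ (whenever the products are well defined): $A\#0=0\#A=A$, $A\#(-A)=0$, $\overline{A\#B}=\bar B\#\bar A$, and $(-A)\#(-B)=-(B\#A)$.
   Context: Let $d\ge 1$, let $\mathbb 1$ denote an identity matrix, and let $\theta=\begin{bmatrix}0&-i\mathbb 1_d\\ i\mathbb 1_d&0\end{bmatrix}$ ($2d\times 2d$). $\mathrm{Sym}(\mathbb C^{n})$ denotes the set of complex symmetric $n\times n$ matrices; $\bar A$ is the entrywise complex conjugate. For $A,B\in\mathrm{Sym}(\mathbb C^{2d})$ such that $M=\begin{bmatrix}\theta A\theta&-\theta\\ \theta&\theta B\theta\end{bmatrix}$ is invertible, one defines $A\#B:=J^TM^{-1}J\in\mathrm{Sym}(\mathbb C^{2d})$, where $J=\begin{bmatrix}-\mathbb 1_{2d}\\ \mathbb 1_{2d}\end{bmatrix}$; $A\#B$ is called well defined when $M$ is invertible. *)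

theory Defs
  imports Complex_Main "Jordan_Normal_Form.Matrix" "Jordan_Normal_Form.Gauss_Jordan_Elimination"
begin

definition sym_mat :: "nat \<Rightarrow> complex mat \<Rightarrow> bool" where
  "sym_mat d A \<longleftrightarrow> A \<in> carrier_mat (2*d) (2*d) \<and> transpose_mat A = A"

definition theta :: "nat \<Rightarrow> complex mat" where
  "theta d = four_block_mat (0\<^sub>m d d) ((- \<i>) \<cdot>\<^sub>m 1\<^sub>m d) (\<i> \<cdot>\<^sub>m 1\<^sub>m d) (0\<^sub>m d d)"

definition Mblock :: "nat \<Rightarrow> complex mat \<Rightarrow> complex mat \<Rightarrow> complex mat" where
  "Mblock d A B = four_block_mat (theta d * A * theta d) (- theta d) (theta d) (theta d * B * theta d)"

definition Jmat :: "nat \<Rightarrow> complex mat" where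
  "Jmat d = (- 1\<^sub>m (2*d)) @\<^sub>r 1\<^sub>m (2*d)"

definition sharp_wd :: "nat \<Rightarrow> complex mat \<Rightarrow> complex mat \<Rightarrow> bool" where
  "sharp_wd d A B \<longleftrightarrow> invertible_mat (Mblock d A B)"

definition sharp :: "nat \<Rightarrow> complex mat \<Rightarrow> complex mat \<Rightarrow> complex mat" where
  "sharp d A B = transpose_mat (Jmat d) * the (mat_inverse (Mblock d A B)) * Jmat d"

definition conj_mat :: "complex mat \<Rightarrow> complex mat" where
  "conj_mat A = map_mat cnj A"

end

theory Submission
  imports Defs
begin

text \<open>Write \<open>\<Gamma>(X) = {(\<theta> w + X w, \<theta> w - X w)}\<close> for the twisted graph of a matrix \<open>X\<close>;
since \<open>\<theta>\<^sup>2 = 1\<close>, it determines \<open>X\<close>. Unwinding \<open>A # B = J\<^sup>T M\<^sup>-\<^sup>1 J\<close> shows that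
\<open>\<Gamma>(A # B)\<close> is the relational composite \<open>\<Gamma>(B) O \<Gamma>(A)\<close>. Every identity then becomes one about
relations: composition is associative, \<open>\<Gamma>(0)\<close> is the identity, \<open>\<Gamma>(-X)\<close> is the converse of
\<open>\<Gamma>(X)\<close>, and \<open>\<Gamma>(conj X)\<close> is the converse of the image of \<open>\<Gamma>(X)\<close> under \<open>v \<mapsto> - conj v\<close>.
For \<open>A # (-A) = 0\<close> one also needs \<open>\<Gamma>(A)\<close> to be single valued; this is where invertibility of
\<open>M\<close> for the pair \<open>(A, -A)\<close> enters.\<close>

lemma theta_carrier [simp]: "theta d \<in> carrier_mat (2*d) (2*d)"
  unfolding theta_def by (metis four_block_carrier_mat mult_2 one_carrier_mat smult_carrier_mat zero_carrier_mat)

lemma theta_dims [simp]: "dim_row (theta d) = 2*d" "dim_col (theta d) = 2*d"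
  using theta_carrier by blast+

lemma theta_mult_vec_carrier [simp]: "w \<in> carrier_vec (2*d) \<Longrightarrow> theta d *\<^sub>v w \<in> carrier_vec (2*d)"
  by (rule mult_mat_vec_carrier[OF theta_carrier])

lemma theta_mult_theta: "theta d * theta d = 1\<^sub>m (2*d)"
proof -
  have "theta d * theta d = four_block_mat (1\<^sub>m d) (0\<^sub>m d d) (0\<^sub>m d d) (1\<^sub>m d)"
    unfolding theta_def
    by (subst mult_four_block_mat[of _ d d]) (auto intro!: arg_cong4[where f=four_block_mat] eq_matI)
  then show ?thesis by (simp add: mult_2)
qed

lemma theta_theta_mult_vec [simp]: "w \<in> carrier_vec (2*d) \<Longrightarrow> theta d *\<^sub>v (theta d *\<^sub>v w) = w"
  by (metis assoc_mult_mat_vec one_mult_mat_vec theta_carrier theta_mult_theta)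

lemma theta_mult_vec_eq_iff:
  "x \<in> carrier_vec (2*d) \<Longrightarrow> y \<in> carrier_vec (2*d) \<Longrightarrow> theta d *\<^sub>v x = y \<longleftrightarrow> x = theta d *\<^sub>v y"
  by auto

lemma theta_sandwich_carrier [simp]:
  "X \<in> carrier_mat (2*d) (2*d) \<Longrightarrow> theta d * X * theta d \<in> carrier_mat (2*d) (2*d)"
  by (metis mult_carrier_mat theta_carrier)

lemma theta_sandwich_mult_theta_vec:
  assumes X: "X \<in> carrier_mat (2*d) (2*d)" and w: "w \<in> carrier_vec (2*d)"
  shows "(theta d * X * theta d) *\<^sub>v (theta d *\<^sub>v w) = theta d *\<^sub>v (X *\<^sub>v w)"
proof -
  have TX: "theta d * X \<in> carrier_mat (2*d) (2*d)"
    using X by (rule mult_carrier_mat[OF theta_carrier])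
  have "(theta d * X * theta d) *\<^sub>v (theta d *\<^sub>v w) = (theta d * X) *\<^sub>v (theta d *\<^sub>v (theta d *\<^sub>v w))"
    using TX w by (rule assoc_mult_mat_vec[OF _ theta_carrier theta_mult_vec_carrier])
  also have "\<dots> = (theta d * X) *\<^sub>v w"
    using w by (simp only: theta_theta_mult_vec)
  also have "\<dots> = theta d *\<^sub>v (X *\<^sub>v w)"
    by (rule assoc_mult_mat_vec[OF theta_carrier X w])
  finally show ?thesis .
qed

lemma eq_matI_mult_vec:
  fixes A B :: "'a :: semiring_1 mat"
  assumes "A \<in> carrier_mat n m" "B \<in> carrier_mat n m" "\<And>v. v \<in> carrier_vec m \<Longrightarrow> A *\<^sub>v v = B *\<^sub>v v"
  shows "A = B"
proof (rule eq_matI)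
  fix i j assume "i < dim_row B" "j < dim_col B"
  then show "A $$ (i, j) = B $$ (i, j)"
    using assms(3)[of "unit_vec m j"] assms(1,2) by (auto simp: vec_eq_iff)
qed (use assms in auto)

lemma zero_mat_mult_vec [simp]: "v \<in> carrier_vec m \<Longrightarrow> 0\<^sub>m n m *\<^sub>v v = 0\<^sub>v n"
  by (rule eq_vecI) auto

lemma conj_mat_mult_vec:
  "X \<in> carrier_mat n m \<Longrightarrow> w \<in> carrier_vec m \<Longrightarrow> conj_mat X *\<^sub>v conjugate w = conjugate (X *\<^sub>v w)"
  by (rule eq_vecI) (auto simp: conj_mat_def scalar_prod_def)

lemma conj_mat_theta: "conj_mat (theta d) = - theta d"
  unfolding conj_mat_def theta_def by (rule eq_matI) auto

lemma theta_mult_conjugate: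
  "w \<in> carrier_vec (2*d) \<Longrightarrow> theta d *\<^sub>v conjugate w = - conjugate (theta d *\<^sub>v w)"
  using conj_mat_mult_vec[OF theta_carrier, of w d] by (simp add: conj_mat_theta) (metis uminus_uminus_vec)

lemma invertible_mat_obtain_mat_inverse:
  fixes M :: "'a :: field mat"
  assumes M: "M \<in> carrier_mat n n" and inv: "invertible_mat M"
  obtains K where "mat_inverse M = Some K" "K \<in> carrier_mat n n" "M * K = 1\<^sub>m n" "K * M = 1\<^sub>m n"
proof (cases "mat_inverse M")
  case None
  from inv obtain B where MB: "M * B = 1\<^sub>m n" and BM: "B * M = 1\<^sub>m (dim_row B)"
    using M unfolding invertible_mat_def inverts_mat_def by auto
  have "dim_row B = n" "dim_col B = n"
    using arg_cong[OF MB, of dim_col] arg_cong[OF BM, of dim_col] M by auto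
  then have "M \<in> Units (ring_mat TYPE('a) n ())"
    using M MB BM by (auto simp: Units_def ring_mat_simps intro!: bexI[of _ B] carrier_matI)
  then show ?thesis
    using mat_inverse(1)[OF M None] by contradiction
next
  case (Some K)
  then show ?thesis
    using mat_inverse(2)[OF M Some] that by blast
qed

definition twisted_graph :: "nat \<Rightarrow> complex mat \<Rightarrow> (complex vec \<times> complex vec) set" where
  "twisted_graph d X =
     {(theta d *\<^sub>v w + X *\<^sub>v w, theta d *\<^sub>v w - X *\<^sub>v w) | w. w \<in> carrier_vec (2*d)}"

lemma twisted_graphI:
  "w \<in> carrier_vec (2*d) \<Longrightarrow> x = theta d *\<^sub>v w + X *\<^sub>v w \<Longrightarrow> y = theta d *\<^sub>v w - X *\<^sub>v w \<Longrightarrow>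
   (x, y) \<in> twisted_graph d X"
  unfolding twisted_graph_def by blast

lemma twisted_graph_carrier:
  "X \<in> carrier_mat (2*d) (2*d) \<Longrightarrow> twisted_graph d X \<subseteq> carrier_vec (2*d) \<times> carrier_vec (2*d)"
  unfolding twisted_graph_def by auto

lemma twisted_graph_subset_imp_eq:
  assumes X: "X \<in> carrier_mat (2*d) (2*d)" and Y: "Y \<in> carrier_mat (2*d) (2*d)"
    and sub: "twisted_graph d X \<subseteq> twisted_graph d Y"
  shows "X = Y"
proof (rule eq_matI_mult_vec[OF X Y])
  fix w :: "complex vec" assume w: "w \<in> carrier_vec (2*d)"
  have "(theta d *\<^sub>v w + X *\<^sub>v w, theta d *\<^sub>v w - X *\<^sub>v w) \<in> twisted_graph d Y"
    using sub twisted_graphI[OF w] by blast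
  then obtain w' where w': "w' \<in> carrier_vec (2*d)"
    and plus: "theta d *\<^sub>v w + X *\<^sub>v w = theta d *\<^sub>v w' + Y *\<^sub>v w'"
    and minus: "theta d *\<^sub>v w - X *\<^sub>v w = theta d *\<^sub>v w' - Y *\<^sub>v w'"
    unfolding twisted_graph_def by blast
  \<comment> \<open>half the sum of the two components is \<open>theta d *\<^sub>v w\<close>, and \<open>theta d\<close> is an involution\<close>
  have "theta d *\<^sub>v w = theta d *\<^sub>v w'"
  proof (rule eq_vecI)
    fix i assume "i < dim_vec (theta d *\<^sub>v w')"
    let ?a = "(theta d *\<^sub>v w) $ i" and ?x = "(X *\<^sub>v w) $ i"
    let ?b = "(theta d *\<^sub>v w') $ i" and ?y = "(Y *\<^sub>v w') $ i"
    have "?a + ?x = ?b + ?y" "?a - ?x = ?b - ?y"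
      using \<open>i < dim_vec (theta d *\<^sub>v w')\<close> plus minus w w' X Y
      by (auto simp: vec_eq_iff simp del: index_mult_mat_vec)
    then have "(?a + ?x) + (?a - ?x) = (?b + ?y) + (?b - ?y)"
      by (simp only:)
    then show "?a = ?b"
      by (simp del: index_mult_mat_vec)
  qed simp
  then have "theta d *\<^sub>v (theta d *\<^sub>v w) = theta d *\<^sub>v (theta d *\<^sub>v w')"
    by (simp only:)
  then have "w = w'"
    using w w' by simp
  then have "theta d *\<^sub>v w + X *\<^sub>v w = theta d *\<^sub>v w + Y *\<^sub>v w"
    using plus by (simp only:)
  then show "X *\<^sub>v w = Y *\<^sub>v w"
    using w X Y by (auto simp: vec_eq_iff algebra_simps simp del: index_mult_mat_vec)
qed

lemma twisted_graph_zero: "twisted_graph d (0\<^sub>m (2*d) (2*d)) = Id_on (carrier_vec (2*d))"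
proof (intro equalityI subsetI)
  fix p assume "p \<in> twisted_graph d (0\<^sub>m (2*d) (2*d))"
  then show "p \<in> Id_on (carrier_vec (2*d))"
    unfolding twisted_graph_def by auto
next
  fix p :: "complex vec \<times> complex vec" assume "p \<in> Id_on (carrier_vec (2*d))"
  then obtain v where v: "v \<in> carrier_vec (2*d)" and p: "p = (v, v)"
    by (auto elim: Id_onE)
  show "p \<in> twisted_graph d (0\<^sub>m (2*d) (2*d))"
    unfolding p using v by (intro twisted_graphI[of "theta d *\<^sub>v v"]) simp_all
qed

lemma twisted_graph_uminus:
  assumes "X \<in> carrier_mat (2*d) (2*d)"
  shows "twisted_graph d (- X) = (twisted_graph d X)\<inverse>"
proof -
  have "theta d *\<^sub>v w + (- X) *\<^sub>v w = theta d *\<^sub>v w - X *\<^sub>v w"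
    and "theta d *\<^sub>v w - (- X) *\<^sub>v w = theta d *\<^sub>v w + X *\<^sub>v w"
    if "w \<in> carrier_vec (2*d)" for w
    using that assms by (auto simp: vec_eq_iff algebra_simps simp del: index_mult_mat_vec)
  then show ?thesis
    unfolding twisted_graph_def by auto metis
qed

lemma twisted_graph_conj_mat:
  fixes X :: "complex mat"
  defines "g \<equiv> \<lambda>v :: complex vec. - conjugate v"
  assumes X: "X \<in> carrier_mat (2*d) (2*d)"
  shows "twisted_graph d (conj_mat X) = (map_prod g g ` twisted_graph d X)\<inverse>"
proof -
  have pointwise: "theta d *\<^sub>v conjugate w + conj_mat X *\<^sub>v conjugate w = g (theta d *\<^sub>v w - X *\<^sub>v w) \<and>
      theta d *\<^sub>v conjugate w - conj_mat X *\<^sub>v conjugate w = g (theta d *\<^sub>v w + X *\<^sub>v w)"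
    if w: "w \<in> carrier_vec (2*d)" for w
    using w X by (auto simp: g_def theta_mult_conjugate conj_mat_mult_vec vec_eq_iff
        simp del: index_mult_mat_vec)
  show ?thesis
  proof (intro equalityI subsetI)
    fix p assume "p \<in> twisted_graph d (conj_mat X)"
    then obtain u where u: "u \<in> carrier_vec (2*d)"
      and p: "p = (theta d *\<^sub>v u + conj_mat X *\<^sub>v u, theta d *\<^sub>v u - conj_mat X *\<^sub>v u)"
      unfolding twisted_graph_def by blast
    have "conjugate u \<in> carrier_vec (2*d)" and "u = conjugate (conjugate u)"
      using u by simp_all
    then show "p \<in> (map_prod g g ` twisted_graph d X)\<inverse>"
      unfolding p using pointwise twisted_graphI by (metis (no_types, lifting) converse_iff image_eqI map_prod_simp)
  next
    fix p assume "p \<in> (map_prod g g ` twisted_graph d X)\<inverse>"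
    then obtain w where w: "w \<in> carrier_vec (2*d)"
      and p: "p = (g (theta d *\<^sub>v w - X *\<^sub>v w), g (theta d *\<^sub>v w + X *\<^sub>v w))"
      unfolding twisted_graph_def by auto
    show "p \<in> twisted_graph d (conj_mat X)"
      unfolding p using pointwise[OF w] w by (intro twisted_graphI[of "conjugate w"]) simp_all
  qed
qed

lemma Mblock_carrier:
  "A \<in> carrier_mat (2*d) (2*d) \<Longrightarrow> B \<in> carrier_mat (2*d) (2*d) \<Longrightarrow>
   Mblock d A B \<in> carrier_mat (2*d+2*d) (2*d+2*d)"
  unfolding Mblock_def by (rule four_block_carrier_mat) auto

lemma Jmat_carrier: "Jmat d \<in> carrier_mat (2*d+2*d) (2*d)"
  unfolding Jmat_def by (rule carrier_append_rows) auto

lemma sharp_carrier [simp]: "sharp d A B \<in> carrier_mat (2*d) (2*d)"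
  unfolding sharp_def using Jmat_carrier[of d] by (auto intro!: carrier_matI)

lemma Jmat_mult_vec: "z \<in> carrier_vec (2*d) \<Longrightarrow> Jmat d *\<^sub>v z = (- z) @\<^sub>v z"
  unfolding Jmat_def by (subst mat_mult_append[of _ "2*d" "2*d"]) auto

lemma transpose_Jmat_mult_append:
  assumes p: "p \<in> carrier_vec (2*d)" and q: "q \<in> carrier_vec (2*d)"
  shows "transpose_mat (Jmat d) *\<^sub>v (p @\<^sub>v q) = q - p"
proof (rule eq_vecI)
  fix i assume "i < dim_vec (q - p)"
  then have i: "i < 2*d" using p by simp
  have "col (Jmat d) i = (- unit_vec (2*d) i) @\<^sub>v unit_vec (2*d) i"
    unfolding Jmat_def append_rows_def
    by (subst col_four_block_mat(1)[of _ "2*d" "2*d" _ 0 _ "2*d"]) (use i in auto)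
  then have "(transpose_mat (Jmat d) *\<^sub>v (p @\<^sub>v q)) $ i = (- unit_vec (2*d) i) \<bullet> p + unit_vec (2*d) i \<bullet> q"
    using i Jmat_carrier[of d] p q by (simp add: scalar_prod_append[of _ "2*d" _ "2*d"])
  then show "(transpose_mat (Jmat d) *\<^sub>v (p @\<^sub>v q)) $ i = (q - p) $ i"
    using i p q by simp
next
  have "dim_col (Jmat d) = 2*d"
    using Jmat_carrier by blast
  then show "dim_vec (transpose_mat (Jmat d) *\<^sub>v (p @\<^sub>v q)) = dim_vec (q - p)"
    using p by simp
qed

lemma Mblock_mult_theta_append:
  assumes A: "A \<in> carrier_mat (2*d) (2*d)" and B: "B \<in> carrier_mat (2*d) (2*d)"
    and w1: "w1 \<in> carrier_vec (2*d)" and w2: "w2 \<in> carrier_vec (2*d)"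
  shows "Mblock d A B *\<^sub>v (theta d *\<^sub>v w1 @\<^sub>v theta d *\<^sub>v w2) =
    (theta d *\<^sub>v (A *\<^sub>v w1) - w2) @\<^sub>v (w1 + theta d *\<^sub>v (B *\<^sub>v w2))"
proof -
  let ?T = "theta d"
  have "Mblock d A B *\<^sub>v (?T *\<^sub>v w1 @\<^sub>v ?T *\<^sub>v w2) =
      (?T * A * ?T *\<^sub>v (?T *\<^sub>v w1) + (- ?T) *\<^sub>v (?T *\<^sub>v w2)) @\<^sub>v
      (?T *\<^sub>v (?T *\<^sub>v w1) + ?T * B * ?T *\<^sub>v (?T *\<^sub>v w2))"
    unfolding Mblock_def
    by (rule four_block_mat_mult_vec[of _ "2*d" "2*d" _ "2*d" _ "2*d"])
      (use A B w1 w2 in simp_all)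
  also have "\<dots> = (?T *\<^sub>v (A *\<^sub>v w1) - w2) @\<^sub>v (w1 + ?T *\<^sub>v (B *\<^sub>v w2))"
    using A B w1 w2 by (simp add: theta_sandwich_mult_theta_vec minus_add_uminus_vec[of _ "2*d"])
  finally show ?thesis .
qed

text \<open>Writing the unknown of \<open>M (p, q) = J z\<close> as \<open>p = \<theta> w1\<close>, \<open>q = \<theta> w2\<close> turns it into the
two equations below; since \<open>J\<^sup>T (p, q) = q - p\<close>, the value \<open>(A # B) z\<close> is then \<open>\<theta> w2 - \<theta> w1\<close>.\<close>

lemma Mblock_mult_theta_append_eq_Jmat_iff:
  assumes A: "A \<in> carrier_mat (2*d) (2*d)" and B: "B \<in> carrier_mat (2*d) (2*d)"
    and w1: "w1 \<in> carrier_vec (2*d)" and w2: "w2 \<in> carrier_vec (2*d)" and z: "z \<in> carrier_vec (2*d)"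
  shows "Mblock d A B *\<^sub>v (theta d *\<^sub>v w1 @\<^sub>v theta d *\<^sub>v w2) = Jmat d *\<^sub>v z \<longleftrightarrow>
    A *\<^sub>v w1 + theta d *\<^sub>v z = theta d *\<^sub>v w2 \<and> theta d *\<^sub>v w1 + B *\<^sub>v w2 = theta d *\<^sub>v z"
proof -
  let ?T = "theta d"
  have "Mblock d A B *\<^sub>v (?T *\<^sub>v w1 @\<^sub>v ?T *\<^sub>v w2) = Jmat d *\<^sub>v z \<longleftrightarrow>
      ?T *\<^sub>v (A *\<^sub>v w1) - w2 = - z \<and> w1 + ?T *\<^sub>v (B *\<^sub>v w2) = z"
    using A B w1 w2 z by (simp add: Mblock_mult_theta_append Jmat_mult_vec append_vec_eq[of _ "2*d"])
  also have "?T *\<^sub>v (A *\<^sub>v w1) - w2 = - z \<longleftrightarrow> ?T *\<^sub>v (A *\<^sub>v w1) = w2 - z"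
    using A w1 w2 z by (auto simp: vec_eq_iff algebra_simps simp del: index_mult_mat_vec)
  also have "\<dots> \<longleftrightarrow> A *\<^sub>v w1 = ?T *\<^sub>v w2 - ?T *\<^sub>v z"
    using A w1 w2 z by (simp add: theta_mult_vec_eq_iff mult_minus_distrib_mat_vec[OF theta_carrier])
  also have "\<dots> \<longleftrightarrow> A *\<^sub>v w1 + ?T *\<^sub>v z = ?T *\<^sub>v w2"
    using A w1 w2 z by (auto simp: vec_eq_iff algebra_simps simp del: index_mult_mat_vec)
  also have "w1 + ?T *\<^sub>v (B *\<^sub>v w2) = z \<longleftrightarrow> ?T *\<^sub>v (B *\<^sub>v w2) = z - w1"
    using B w1 w2 z by (auto simp: vec_eq_iff algebra_simps simp del: index_mult_mat_vec)
  also have "\<dots> \<longleftrightarrow> B *\<^sub>v w2 = ?T *\<^sub>v z - ?T *\<^sub>v w1"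
    using B w1 w2 z by (simp add: theta_mult_vec_eq_iff mult_minus_distrib_mat_vec[OF theta_carrier])
  also have "\<dots> \<longleftrightarrow> ?T *\<^sub>v w1 + B *\<^sub>v w2 = ?T *\<^sub>v z"
    using B w1 w2 z by (auto simp: vec_eq_iff algebra_simps simp del: index_mult_mat_vec)
  finally show ?thesis .
qed

lemma sharp_wd_obtain_inverse:
  assumes "A \<in> carrier_mat (2*d) (2*d)" "B \<in> carrier_mat (2*d) (2*d)" "sharp_wd d A B"
  obtains K where "the (mat_inverse (Mblock d A B)) = K" "K \<in> carrier_mat (2*d+2*d) (2*d+2*d)"
    "Mblock d A B * K = 1\<^sub>m (2*d+2*d)" "K * Mblock d A B = 1\<^sub>m (2*d+2*d)"
  using invertible_mat_obtain_mat_inverse[OF Mblock_carrier] assms unfolding sharp_wd_def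
  by (metis option.sel)

lemma Mblock_mult_vec_cancel:
  assumes A: "A \<in> carrier_mat (2*d) (2*d)" and B: "B \<in> carrier_mat (2*d) (2*d)" and wd: "sharp_wd d A B"
    and x: "x \<in> carrier_vec (2*d+2*d)" and y: "y \<in> carrier_vec (2*d+2*d)"
    and eq: "Mblock d A B *\<^sub>v x = Mblock d A B *\<^sub>v y"
  shows "x = y"
proof -
  obtain K where K: "K \<in> carrier_mat (2*d+2*d) (2*d+2*d)" and KM: "K * Mblock d A B = 1\<^sub>m (2*d+2*d)"
    using sharp_wd_obtain_inverse[OF A B wd] by blast
  have "K *\<^sub>v (Mblock d A B *\<^sub>v u) = u" if "u \<in> carrier_vec (2*d+2*d)" for u
    using that K KM Mblock_carrier[OF A B] by (simp flip: assoc_mult_mat_vec)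
  then show ?thesis
    using eq x y by metis
qed

lemma sharp_equations_solvable:
  assumes A: "A \<in> carrier_mat (2*d) (2*d)" and B: "B \<in> carrier_mat (2*d) (2*d)"
    and wd: "sharp_wd d A B" and z: "z \<in> carrier_vec (2*d)"
  obtains w1 w2 where "w1 \<in> carrier_vec (2*d)" "w2 \<in> carrier_vec (2*d)"
    "A *\<^sub>v w1 + theta d *\<^sub>v z = theta d *\<^sub>v w2" "theta d *\<^sub>v w1 + B *\<^sub>v w2 = theta d *\<^sub>v z"
proof -
  obtain K where K: "K \<in> carrier_mat (2*d+2*d) (2*d+2*d)" and MK: "Mblock d A B * K = 1\<^sub>m (2*d+2*d)"
    using sharp_wd_obtain_inverse[OF A B wd] by blast
  define v where "v = K *\<^sub>v (Jmat d *\<^sub>v z)"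
  define w1 where "w1 = theta d *\<^sub>v vec_first v (2*d)"
  define w2 where "w2 = theta d *\<^sub>v vec_last v (2*d)"
  have Jz: "Jmat d *\<^sub>v z \<in> carrier_vec (2*d+2*d)"
    using Jmat_carrier z by (rule mult_mat_vec_carrier)
  have v: "v \<in> carrier_vec (2*d+2*d)"
    unfolding v_def using K Jz by (rule mult_mat_vec_carrier)
  have "Mblock d A B *\<^sub>v v = Jmat d *\<^sub>v z"
    unfolding v_def using MK K Jz Mblock_carrier[OF A B] by (simp flip: assoc_mult_mat_vec)
  moreover have "theta d *\<^sub>v w1 @\<^sub>v theta d *\<^sub>v w2 = v"
    unfolding w1_def w2_def using v by simp
  ultimately have "Mblock d A B *\<^sub>v (theta d *\<^sub>v w1 @\<^sub>v theta d *\<^sub>v w2) = Jmat d *\<^sub>v z"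
    by simp
  moreover have "w1 \<in> carrier_vec (2*d)" "w2 \<in> carrier_vec (2*d)"
    unfolding w1_def w2_def by simp_all
  ultimately show ?thesis
    using that Mblock_mult_theta_append_eq_Jmat_iff[OF A B _ _ z] by blast
qed

lemma sharp_equations_unique:
  assumes A: "A \<in> carrier_mat (2*d) (2*d)" and B: "B \<in> carrier_mat (2*d) (2*d)"
    and wd: "sharp_wd d A B" and z: "z \<in> carrier_vec (2*d)"
    and w: "w1 \<in> carrier_vec (2*d)" "w2 \<in> carrier_vec (2*d)"
    and w': "w1' \<in> carrier_vec (2*d)" "w2' \<in> carrier_vec (2*d)"
    and eqs: "A *\<^sub>v w1 + theta d *\<^sub>v z = theta d *\<^sub>v w2" "theta d *\<^sub>v w1 + B *\<^sub>v w2 = theta d *\<^sub>v z"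
    and eqs': "A *\<^sub>v w1' + theta d *\<^sub>v z = theta d *\<^sub>v w2'" "theta d *\<^sub>v w1' + B *\<^sub>v w2' = theta d *\<^sub>v z"
  shows "w1 = w1' \<and> w2 = w2'"
proof -
  have "Mblock d A B *\<^sub>v (theta d *\<^sub>v w1 @\<^sub>v theta d *\<^sub>v w2) = Jmat d *\<^sub>v z"
    using Mblock_mult_theta_append_eq_Jmat_iff[OF A B w z] eqs by blast
  moreover have "Mblock d A B *\<^sub>v (theta d *\<^sub>v w1' @\<^sub>v theta d *\<^sub>v w2') = Jmat d *\<^sub>v z"
    using Mblock_mult_theta_append_eq_Jmat_iff[OF A B w' z] eqs' by blast
  ultimately have Meq: "Mblock d A B *\<^sub>v (theta d *\<^sub>v w1 @\<^sub>v theta d *\<^sub>v w2) =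
        Mblock d A B *\<^sub>v (theta d *\<^sub>v w1' @\<^sub>v theta d *\<^sub>v w2')"
    by (simp only:)
  have "theta d *\<^sub>v w1 @\<^sub>v theta d *\<^sub>v w2 = theta d *\<^sub>v w1' @\<^sub>v theta d *\<^sub>v w2'"
    by (rule Mblock_mult_vec_cancel[OF A B wd _ _ Meq];
        use w w' in \<open>intro append_carrier_vec theta_mult_vec_carrier\<close>)
  then have "theta d *\<^sub>v w1 = theta d *\<^sub>v w1'" "theta d *\<^sub>v w2 = theta d *\<^sub>v w2'"
    using w w' by (simp_all add: append_vec_eq[of _ "2*d"])
  then show ?thesis
    using w w' by (metis theta_theta_mult_vec)
qed

lemma sharp_mult_vec:
  assumes A: "A \<in> carrier_mat (2*d) (2*d)" and B: "B \<in> carrier_mat (2*d) (2*d)"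
    and wd: "sharp_wd d A B" and z: "z \<in> carrier_vec (2*d)"
    and w1: "w1 \<in> carrier_vec (2*d)" and w2: "w2 \<in> carrier_vec (2*d)"
    and eqs: "A *\<^sub>v w1 + theta d *\<^sub>v z = theta d *\<^sub>v w2" "theta d *\<^sub>v w1 + B *\<^sub>v w2 = theta d *\<^sub>v z"
  shows "sharp d A B *\<^sub>v z = theta d *\<^sub>v w2 - theta d *\<^sub>v w1"
proof -
  obtain K where K_def: "the (mat_inverse (Mblock d A B)) = K"
    and K: "K \<in> carrier_mat (2*d+2*d) (2*d+2*d)" and KM: "K * Mblock d A B = 1\<^sub>m (2*d+2*d)"
    using sharp_wd_obtain_inverse[OF A B wd] by blast
  let ?x = "theta d *\<^sub>v w1 @\<^sub>v theta d *\<^sub>v w2"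
  have x: "?x \<in> carrier_vec (2*d+2*d)"
    using w1 w2 by (intro append_carrier_vec) simp_all
  have "Jmat d *\<^sub>v z = Mblock d A B *\<^sub>v ?x"
    using Mblock_mult_theta_append_eq_Jmat_iff[OF A B w1 w2 z] eqs by simp
  then have "K *\<^sub>v (Jmat d *\<^sub>v z) = ?x"
    using x K KM Mblock_carrier[OF A B] by (simp flip: assoc_mult_mat_vec)
  moreover have "sharp d A B *\<^sub>v z = transpose_mat (Jmat d) *\<^sub>v (K *\<^sub>v (Jmat d *\<^sub>v z))"
  proof -
    have JT: "transpose_mat (Jmat d) \<in> carrier_mat (2*d) (2*d+2*d)"
      using Jmat_carrier by simp
    have "sharp d A B *\<^sub>v z = (transpose_mat (Jmat d) * K) *\<^sub>v (Jmat d *\<^sub>v z)"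
      unfolding sharp_def K_def using mult_carrier_mat[OF JT K] Jmat_carrier z
      by (rule assoc_mult_mat_vec)
    also have "\<dots> = transpose_mat (Jmat d) *\<^sub>v (K *\<^sub>v (Jmat d *\<^sub>v z))"
      using JT K mult_mat_vec_carrier[OF Jmat_carrier z] by (rule assoc_mult_mat_vec)
    finally show ?thesis .
  qed
  ultimately show ?thesis
    using w1 w2 by (simp add: transpose_Jmat_mult_append)
qed

lemma twisted_graph_sharp:
  assumes A: "A \<in> carrier_mat (2*d) (2*d)" and B: "B \<in> carrier_mat (2*d) (2*d)" and wd: "sharp_wd d A B"
  shows "twisted_graph d (sharp d A B) = twisted_graph d B O twisted_graph d A"
proof (intro equalityI subsetI)
  let ?T = "theta d" and ?X = "sharp d A B"
  fix p assume "p \<in> twisted_graph d ?X"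
  then obtain z where z: "z \<in> carrier_vec (2*d)" and p: "p = (?T *\<^sub>v z + ?X *\<^sub>v z, ?T *\<^sub>v z - ?X *\<^sub>v z)"
    unfolding twisted_graph_def by blast
  obtain w1 w2 where w: "w1 \<in> carrier_vec (2*d)" "w2 \<in> carrier_vec (2*d)"
    and eqs: "A *\<^sub>v w1 + ?T *\<^sub>v z = ?T *\<^sub>v w2" "?T *\<^sub>v w1 + B *\<^sub>v w2 = ?T *\<^sub>v z"
    using sharp_equations_solvable[OF A B wd z] by blast
  have X: "?X *\<^sub>v z = ?T *\<^sub>v w2 - ?T *\<^sub>v w1"
    by (rule sharp_mult_vec[OF A B wd z w eqs])
  have "(?T *\<^sub>v z + ?X *\<^sub>v z, ?T *\<^sub>v w2 - B *\<^sub>v w2) \<in> twisted_graph d B"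
    using w z A B by (intro twisted_graphI[OF w(2)])
      (auto simp: vec_eq_iff algebra_simps X eqs[symmetric] simp del: index_mult_mat_vec)
  moreover have "(?T *\<^sub>v w2 - B *\<^sub>v w2, ?T *\<^sub>v z - ?X *\<^sub>v z) \<in> twisted_graph d A"
    using w z A B by (intro twisted_graphI[OF w(1)])
      (auto simp: vec_eq_iff algebra_simps X eqs[symmetric] simp del: index_mult_mat_vec)
  ultimately show "p \<in> twisted_graph d B O twisted_graph d A"
    unfolding p by (rule relcompI)
next
  let ?T = "theta d" and ?X = "sharp d A B"
  fix p assume "p \<in> twisted_graph d B O twisted_graph d A"
  then obtain w1 w2 where w: "w1 \<in> carrier_vec (2*d)" "w2 \<in> carrier_vec (2*d)"
    and p: "p = (?T *\<^sub>v w2 + B *\<^sub>v w2, ?T *\<^sub>v w1 - A *\<^sub>v w1)"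
    and mid: "?T *\<^sub>v w2 - B *\<^sub>v w2 = ?T *\<^sub>v w1 + A *\<^sub>v w1"
    unfolding twisted_graph_def by blast
  define z where "z = ?T *\<^sub>v (?T *\<^sub>v w1 + B *\<^sub>v w2)"
  have z: "z \<in> carrier_vec (2*d)" and Tz: "?T *\<^sub>v z = ?T *\<^sub>v w1 + B *\<^sub>v w2"
    unfolding z_def using w B by simp_all
  have eqs: "A *\<^sub>v w1 + ?T *\<^sub>v z = ?T *\<^sub>v w2" "?T *\<^sub>v w1 + B *\<^sub>v w2 = ?T *\<^sub>v z"
    using Tz mid w A B by (auto simp: vec_eq_iff algebra_simps simp del: index_mult_mat_vec)
  have X: "?X *\<^sub>v z = ?T *\<^sub>v w2 - ?T *\<^sub>v w1"
    by (rule sharp_mult_vec[OF A B wd z w eqs])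
  show "p \<in> twisted_graph d ?X"
    unfolding p using X Tz mid w z A B
    by (intro twisted_graphI[OF z]) (auto simp: vec_eq_iff algebra_simps simp del: index_mult_mat_vec)
qed

lemma single_valued_twisted_graph:
  assumes A: "A \<in> carrier_mat (2*d) (2*d)" and wd: "sharp_wd d A (- A)"
  shows "single_valued (twisted_graph d A)"
proof (rule single_valuedI)
  let ?T = "theta d"
  fix x y y' assume "(x, y) \<in> twisted_graph d A" "(x, y') \<in> twisted_graph d A"
  then obtain w w' where w: "w \<in> carrier_vec (2*d)" and w': "w' \<in> carrier_vec (2*d)"
    and "x = ?T *\<^sub>v w + A *\<^sub>v w" and y: "y = ?T *\<^sub>v w - A *\<^sub>v w"
    and "x = ?T *\<^sub>v w' + A *\<^sub>v w'" and y': "y' = ?T *\<^sub>v w' - A *\<^sub>v w'"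
    unfolding twisted_graph_def by blast
  then have x: "?T *\<^sub>v w + A *\<^sub>v w = ?T *\<^sub>v w' + A *\<^sub>v w'"
    by simp
  have mA: "- A \<in> carrier_mat (2*d) (2*d)"
    using A by simp
  have Tw': "?T *\<^sub>v w' = ?T *\<^sub>v w + A *\<^sub>v w - A *\<^sub>v w'"
    using x w w' A by (auto simp: vec_eq_iff algebra_simps simp del: index_mult_mat_vec)
  \<comment> \<open>both \<open>(w, w')\<close> and \<open>(w', w)\<close> solve the equations of \<open>A # (- A)\<close> for the same right-hand side\<close>
  define z where "z = ?T *\<^sub>v (?T *\<^sub>v w - A *\<^sub>v w')"
  have "?T *\<^sub>v w - A *\<^sub>v w' \<in> carrier_vec (2*d)"
    using w w' A by simp
  then have z: "z \<in> carrier_vec (2*d)" and Tz: "?T *\<^sub>v z = ?T *\<^sub>v w - A *\<^sub>v w'"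
    unfolding z_def by (rule theta_mult_vec_carrier, rule theta_theta_mult_vec)
  have "w = w' \<and> w' = w"
    by (rule sharp_equations_unique[OF A mA wd z w w' w' w])
      (use w w' A in \<open>auto simp: vec_eq_iff algebra_simps Tz Tw' simp del: index_mult_mat_vec\<close>)
  then have "w = w'"
    by (rule conjunct1)
  then show "y = y'"
    using y y' by simp
qed

lemma sharp_assoc:
  assumes A: "A \<in> carrier_mat (2*d) (2*d)" and B: "B \<in> carrier_mat (2*d) (2*d)"
    and C: "C \<in> carrier_mat (2*d) (2*d)"
    and wd: "sharp_wd d A B" "sharp_wd d B C" "sharp_wd d (sharp d A B) C" "sharp_wd d A (sharp d B C)"
  shows "sharp d (sharp d A B) C = sharp d A (sharp d B C)"
proof (rule twisted_graph_subset_imp_eq[OF sharp_carrier sharp_carrier])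
  have "twisted_graph d (sharp d (sharp d A B) C) = twisted_graph d C O (twisted_graph d B O twisted_graph d A)"
    by (simp add: twisted_graph_sharp A B C wd)
  also have "\<dots> = (twisted_graph d C O twisted_graph d B) O twisted_graph d A"
    by (rule O_assoc[symmetric])
  also have "\<dots> = twisted_graph d (sharp d A (sharp d B C))"
    by (simp add: twisted_graph_sharp A B C wd)
  finally show "twisted_graph d (sharp d (sharp d A B) C) \<subseteq> twisted_graph d (sharp d A (sharp d B C))"
    by (rule equalityD1)
qed

lemma sharp_zero_right:
  assumes A: "A \<in> carrier_mat (2*d) (2*d)" and wd: "sharp_wd d A (0\<^sub>m (2*d) (2*d))"
  shows "sharp d A (0\<^sub>m (2*d) (2*d)) = A"
proof (rule twisted_graph_subset_imp_eq[OF sharp_carrier A])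
  have "twisted_graph d (sharp d A (0\<^sub>m (2*d) (2*d))) = Id_on (carrier_vec (2*d)) O twisted_graph d A"
    by (simp add: twisted_graph_sharp twisted_graph_zero A wd)
  also have "\<dots> \<subseteq> twisted_graph d A"
    by blast
  finally show "twisted_graph d (sharp d A (0\<^sub>m (2*d) (2*d))) \<subseteq> twisted_graph d A" .
qed

lemma sharp_zero_left:
  assumes A: "A \<in> carrier_mat (2*d) (2*d)" and wd: "sharp_wd d (0\<^sub>m (2*d) (2*d)) A"
  shows "sharp d (0\<^sub>m (2*d) (2*d)) A = A"
proof (rule twisted_graph_subset_imp_eq[OF sharp_carrier A])
  have "twisted_graph d (sharp d (0\<^sub>m (2*d) (2*d)) A) = twisted_graph d A O Id_on (carrier_vec (2*d))"
    by (simp add: twisted_graph_sharp twisted_graph_zero A wd)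
  also have "\<dots> \<subseteq> twisted_graph d A"
    by blast
  finally show "twisted_graph d (sharp d (0\<^sub>m (2*d) (2*d)) A) \<subseteq> twisted_graph d A" .
qed

lemma sharp_right_uminus:
  assumes A: "A \<in> carrier_mat (2*d) (2*d)" and wd: "sharp_wd d A (- A)"
  shows "sharp d A (- A) = 0\<^sub>m (2*d) (2*d)"
proof (rule twisted_graph_subset_imp_eq[OF sharp_carrier zero_carrier_mat])
  have "twisted_graph d (sharp d A (- A)) = (twisted_graph d A)\<inverse> O twisted_graph d A"
    using A wd by (simp add: twisted_graph_sharp twisted_graph_uminus)
  also have "\<dots> \<subseteq> Id_on (carrier_vec (2*d))"
    using single_valued_twisted_graph[OF A wd] twisted_graph_carrier[OF A]
    by (auto dest: single_valuedD)
  finally show "twisted_graph d (sharp d A (- A)) \<subseteq> twisted_graph d (0\<^sub>m (2*d) (2*d))"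
    by (simp only: twisted_graph_zero)
qed

lemma sharp_uminus_uminus:
  assumes A: "A \<in> carrier_mat (2*d) (2*d)" and B: "B \<in> carrier_mat (2*d) (2*d)"
    and wd: "sharp_wd d (- A) (- B)" "sharp_wd d B A"
  shows "sharp d (- A) (- B) = - sharp d B A"
proof (rule twisted_graph_subset_imp_eq[OF sharp_carrier uminus_carrier_mat[OF sharp_carrier]])
  have "twisted_graph d (sharp d (- A) (- B)) = (twisted_graph d B)\<inverse> O (twisted_graph d A)\<inverse>"
    using A B wd by (simp add: twisted_graph_sharp twisted_graph_uminus)
  also have "\<dots> = (twisted_graph d A O twisted_graph d B)\<inverse>"
    by (rule converse_relcomp[symmetric])
  also have "\<dots> = twisted_graph d (- sharp d B A)"
    using A B wd by (simp add: twisted_graph_sharp twisted_graph_uminus)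
  finally show "twisted_graph d (sharp d (- A) (- B)) \<subseteq> twisted_graph d (- sharp d B A)"
    by (rule equalityD1)
qed

lemma conj_mat_sharp:
  assumes A: "A \<in> carrier_mat (2*d) (2*d)" and B: "B \<in> carrier_mat (2*d) (2*d)"
    and wd: "sharp_wd d A B" "sharp_wd d (conj_mat B) (conj_mat A)"
  shows "conj_mat (sharp d A B) = sharp d (conj_mat B) (conj_mat A)"
proof -
  let ?g = "\<lambda>v :: complex vec. - conjugate v"
  let ?G = "\<lambda>X. (map_prod ?g ?g ` twisted_graph d X)\<inverse>"
  have carrier: "conj_mat X \<in> carrier_mat (2*d) (2*d)" if "X \<in> carrier_mat (2*d) (2*d)" for X
    using that unfolding conj_mat_def by simp
  show ?thesis
  proof (rule twisted_graph_subset_imp_eq[OF carrier[OF sharp_carrier] sharp_carrier])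
    have "twisted_graph d (conj_mat (sharp d A B)) = ?G (sharp d A B)"
      by (rule twisted_graph_conj_mat[OF sharp_carrier])
    also have "\<dots> = (map_prod ?g ?g ` (twisted_graph d B O twisted_graph d A))\<inverse>"
      by (simp add: twisted_graph_sharp A B wd)
    also have "\<dots> \<subseteq> (map_prod ?g ?g ` twisted_graph d B O map_prod ?g ?g ` twisted_graph d A)\<inverse>"
      unfolding converse_mono by fastforce
    also have "\<dots> = ?G A O ?G B"
      by (rule converse_relcomp)
    also have "\<dots> = twisted_graph d (sharp d (conj_mat B) (conj_mat A))"
      using A B wd by (simp add: twisted_graph_sharp twisted_graph_conj_mat carrier)
    finally show "twisted_graph d (conj_mat (sharp d A B)) \<subseteq> twisted_graph d (sharp d (conj_mat B) (conj_mat A))" .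
  qed
qed

theorem mainTheorem2:
  fixes d :: nat
  assumes "d \<ge> 1"
  shows
    "(\<forall>A B C. sym_mat d A \<and> sym_mat d B \<and> sym_mat d C \<and>
        sharp_wd d A B \<and> sharp_wd d B C \<and>
        sharp_wd d (sharp d A B) C \<and> sharp_wd d A (sharp d B C) \<longrightarrow>
        sharp d (sharp d A B) C = sharp d A (sharp d B C))
   \<and> (\<forall>A. sym_mat d A \<and> sharp_wd d A (0\<^sub>m (2*d) (2*d)) \<longrightarrow>
        sharp d A (0\<^sub>m (2*d) (2*d)) = A)
   \<and> (\<forall>A. sym_mat d A \<and> sharp_wd d (0\<^sub>m (2*d) (2*d)) A \<longrightarrow>
        sharp d (0\<^sub>m (2*d) (2*d)) A = A)
   \<and> (\<forall>A. sym_mat d A \<and> sharp_wd d A (- A) \<longrightarrow>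
        sharp d A (- A) = 0\<^sub>m (2*d) (2*d))
   \<and> (\<forall>A B. sym_mat d A \<and> sym_mat d B \<and> sharp_wd d A B \<and>
        sharp_wd d (conj_mat B) (conj_mat A) \<longrightarrow>
        conj_mat (sharp d A B) = sharp d (conj_mat B) (conj_mat A))
   \<and> (\<forall>A B. sym_mat d A \<and> sym_mat d B \<and> sharp_wd d (- A) (- B) \<and> sharp_wd d B A \<longrightarrow>
        sharp d (- A) (- B) = - sharp d B A)"
proof -
  have carrier: "A \<in> carrier_mat (2*d) (2*d)" if "sym_mat d A" for A
    using that unfolding sym_mat_def by blast
  show ?thesis
    by (intro conjI allI impI; elim conjE)
      (simp_all add: carrier sharp_assoc sharp_zero_right sharp_zero_left sharp_right_uminus
        sharp_uminus_uminus conj_mat_sharp)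
qed

end
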